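(* In the ARRU model described in the context, assume $m_1\neq m_2$ and condition (E). Then for every $j>0$, $$\sup_{n\ge1}E\Big[\Big(\frac{n}{Y_n}\Big)^j\Big]<\infty.$$
   Context: ARRU model. Fix $0<a\le b<\infty$, a measurable space $S$, probability measures $\mu_1,\mu_2$ on $S$ and a measurable $u:S\to[a,b]$. On a probability space let $(\xi_{1,n})_{n\ge1}$ be i.i.d. with law $\mu_1$, $(\xi_{2,n})_{n\ge1}$ i.i.d. with law $\mu_2$, and $(U_n)_{n\ge1}$ i.i.d. uniform on $(0,1)$, the three sequences mutually independent. Put $D_{j,n}=u(\xi_{j,n})$ and $m_j=\int u\,d\mu_j$ ($j=1,2$). Fix $y_{1,0},y_{2,0}>0$, $y_0=y_{1,0}+y_{2,0}$, and set $Y_{1,0}=y_{1,0}$, $Y_{2,0}=y_{2,0}$. Let $\mathcal F_0$ be trivial and $\mathcal F_n=\sigma\big(X_i,\ X_i\xi_{1,i}+(1-X_i)\xi_{2,i}:\ i\le n\big)$. Thresholds $\hat\rho_{1,n},\hat\rho_{2,n}$ ($n\ge0$) are $\mathcal F_n$-measurable random variables with values in $(0,1)$ and $\hat\rho_{1,n}\ge\hat\rho_{2,n}$ a.s. Recursively for $n\ge0$: $Y_n=Y_{1,n}+Y_{2,n}$, $Z_n=Y_{1,n}/Y_n$, $W_{1,n}=\mathbf 1\{Z_n\le\hat\rho_{1,n}\}$, $W_{2,n}=\mathbf 1\{Z_n\ge\hat\rho_{2,n}\}$, $X_{n+1}=\mathbf 1\{U_{n+1}<Z_n\}$, $Y_{1,n+1}=Y_{1,n}+X_{n+1}D_{1,n+1}W_{1,n}$,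 $Y_{2,n+1}=Y_{2,n}+(1-X_{n+1})D_{2,n+1}W_{2,n}$. Fix constants $0<\rho_2\le\rho_1<1$. Condition (E): for each $j\in\{1,2\}$ and each $\varepsilon>0$ there is $c_1\in(0,\infty)$ such that $P(|\hat\rho_{j,n}-\rho_j|>\varepsilon)\le c_1\exp(-n\varepsilon^2)$ for all sufficiently large $n$. *)

theory Defs
  imports "HOL-Probability.Probability"
begin

text \<open>Parameters: utility u, the sequences xi1 xi2 (values in S), U (uniforms),
  thresholds r1 r2 (estimates rho-hat), initial compositions y10 y20.
  Indices n >= 1 of xi1, xi2, U are used as in the paper; index 0 is unused.
  arru_Y ... n w = (Y_{1,n}(w), Y_{2,n}(w)).\<close>

fun arru_Y :: "('s \<Rightarrow> real) \<Rightarrow> (nat \<Rightarrow> 'w \<Rightarrow> 's) \<Rightarrow> (nat \<Rightarrow> 'w \<Rightarrow> 's) \<Rightarrow> (nat \<Rightarrow> 'w \<Rightarrow> real)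
    \<Rightarrow> (nat \<Rightarrow> 'w \<Rightarrow> real) \<Rightarrow> (nat \<Rightarrow> 'w \<Rightarrow> real) \<Rightarrow> real \<Rightarrow> real \<Rightarrow> nat \<Rightarrow> 'w \<Rightarrow> real \<times> real"
where
  "arru_Y u xi1 xi2 U r1 r2 y10 y20 0 w = (y10, y20)"
| "arru_Y u xi1 xi2 U r1 r2 y10 y20 (Suc n) w =
     (let (y1, y2) = arru_Y u xi1 xi2 U r1 r2 y10 y20 n w;
          z = y1 / (y1 + y2);
          x = (if U (Suc n) w < z then 1 else 0 :: real);
          w1 = (if z \<le> r1 n w then 1 else 0 :: real);
          w2 = (if z \<ge> r2 n w then 1 else 0 :: real)
      in (y1 + x * u (xi1 (Suc n) w) * w1, y2 + (1 - x) * u (xi2 (Suc n) w) * w2))"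

definition arru_Ytot where
  "arru_Ytot u xi1 xi2 U r1 r2 y10 y20 n w =
     fst (arru_Y u xi1 xi2 U r1 r2 y10 y20 n w) + snd (arru_Y u xi1 xi2 U r1 r2 y10 y20 n w)"

definition arru_Z where
  "arru_Z u xi1 xi2 U r1 r2 y10 y20 n w =
     fst (arru_Y u xi1 xi2 U r1 r2 y10 y20 n w) / arru_Ytot u xi1 xi2 U r1 r2 y10 y20 n w"

definition arru_X :: "('s \<Rightarrow> real) \<Rightarrow> (nat \<Rightarrow> 'w \<Rightarrow> 's) \<Rightarrow> (nat \<Rightarrow> 'w \<Rightarrow> 's) \<Rightarrow> (nat \<Rightarrow> 'w \<Rightarrow> real)
    \<Rightarrow> (nat \<Rightarrow> 'w \<Rightarrow> real) \<Rightarrow> (nat \<Rightarrow> 'w \<Rightarrow> real) \<Rightarrow> real \<Rightarrow> real \<Rightarrow> nat \<Rightarrow> 'w \<Rightarrow> real" where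
  "arru_X u xi1 xi2 U r1 r2 y10 y20 n w =
     (if n = 0 then 0 else if U n w < arru_Z u xi1 xi2 U r1 r2 y10 y20 (n - 1) w then 1 else 0)"

text \<open>Observed draw X_i xi_{1,i} + (1 - X_i) xi_{2,i}.\<close>
definition arru_obs where
  "arru_obs u xi1 xi2 U r1 r2 y10 y20 n w =
     (if arru_X u xi1 xi2 U r1 r2 y10 y20 n w = 1 then xi1 n w else xi2 n w)"

definition arru_F :: "'w measure \<Rightarrow> 's measure \<Rightarrow> ('s \<Rightarrow> real) \<Rightarrow> (nat \<Rightarrow> 'w \<Rightarrow> 's) \<Rightarrow> (nat \<Rightarrow> 'w \<Rightarrow> 's)
    \<Rightarrow> (nat \<Rightarrow> 'w \<Rightarrow> real) \<Rightarrow> (nat \<Rightarrow> 'w \<Rightarrow> real) \<Rightarrow> (nat \<Rightarrow> 'w \<Rightarrow> real) \<Rightarrow> real \<Rightarrow> real \<Rightarrow> nat \<Rightarrow> 'w measure" where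
  "arru_F M S u xi1 xi2 U r1 r2 y10 y20 n =
     sigma (space M)
       (\<Union>i\<in>{1..n}.
          {arru_X u xi1 xi2 U r1 r2 y10 y20 i -` A \<inter> space M | A. A \<in> sets (borel :: real measure)}
        \<union> {arru_obs u xi1 xi2 U r1 r2 y10 y20 i -` A \<inter> space M | A. A \<in> sets S})"

end

theory Submission
  imports Defs "HOL-Real_Asymp.Real_Asymp"
begin

text \<open>Let \<open>T n = Y1 n + Y2 n\<close> and let \<open>m n = min (Y1 n) (Y2 n) / T n\<close> be the fraction of the
  minority colour. As the thresholds are ordered, a draw of at least one colour is accepted at
  every step, so given the past the urn grows by at least \<open>a\<close> with probability at least \<open>m n\<close>; by
  the mean value theorem \<open>E[T (n+1)^-j] \<le> E[T n^-j] - c E[m n * T n^(-j-1)]\<close>. Splitting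
  \<open>T^-j \<le> l m T^(-j-1) + (l m)^-j\<close> with \<open>l\<close> proportional to \<open>n\<close> turns this into a recursive
  inequality whose solutions decay like \<open>n^-j\<close>, provided \<open>E[m n^-j]\<close> is bounded. Since
  \<open>1 / m \<le> T / Y1 + T / Y2\<close>, it suffices to bound the moments of \<open>T / Y1\<close> (and symmetrically
  \<open>T / Y2\<close>): this ratio grows at most linearly, and above a fixed level it can only grow at steps
  where the estimate of \<open>\<rho>\<^sub>2\<close> is far off, which by condition (E) has exponentially small
  probability.\<close>

section \<open>Independent uniform decisions\<close>

lemma integral_uniform_if_less:
  fixes z x1 x2 :: real assumes z: "0 \<le> z" "z \<le> 1"
  shows "(\<integral>t. (if t < z then x1 else x2) \<partial>uniform_measure lborel {0<..<1::real}) = z * x1 + (1 - z) * x2"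
proof -
  interpret PU: prob_space "uniform_measure lborel {0<..<1::real}"
    by (intro prob_space_uniform_measure) auto
  have int: "integrable (uniform_measure lborel {0<..<1::real}) (\<lambda>t. (x1 - x2) * indicator {..<z} t :: real)"
    using PU.emeasure_finite[of "{..<z}", folded less_top]
    by (intro integrable_mult_right integrable_real_indicator) (auto simp: less_top)
  have prob: "measure (uniform_measure lborel {0<..<1::real}) {..<z} = z"
  proof -
    have "{0<..<1::real} \<inter> {..<z} = {0<..<z}" using z by auto
    then show ?thesis using z by simp
  qed
  have "(\<lambda>t. if t < z then x1 else x2) = (\<lambda>t. x2 + (x1 - x2) * indicator {..<z} t)"
    by (auto simp: fun_eq_iff indicator_def)
  then have "(\<integral>t. (if t < z then x1 else x2) \<partial>uniform_measure lborel {0<..<1::real})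
      = x2 + (x1 - x2) * measure (uniform_measure lborel {0<..<1::real}) {..<z}"
    by (simp only: Bochner_Integration.integral_add[OF PU.integrable_const int]
        integral_mult_right_zero Bochner_Integration.integral_indicator)
      (use PU.prob_space in \<open>simp del: measure_uniform_measure\<close>)
  then show ?thesis by (simp only: prob) (simp add: algebra_simps)
qed

lemma (in prob_space) distr_pair_eq_pair_measure:
  assumes V: "random_variable N V" and X: "random_variable L X"
    and indep: "indep_set (sigma_sets (space M) {V -` A \<inter> space M | A. A \<in> sets N})
                          (sigma_sets (space M) {X -` A \<inter> space M | A. A \<in> sets L})"
  shows "distr M N V \<Otimes>\<^sub>M distr M L X = distr M (N \<Otimes>\<^sub>M L) (\<lambda>w. (V w, X w))"
proof (rule pair_measure_eqI)
  interpret PV: prob_space "distr M N V" by (rule prob_space_distr[OF V])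
  interpret PX: prob_space "distr M L X" by (rule prob_space_distr[OF X])
  show "sigma_finite_measure (distr M N V)" "sigma_finite_measure (distr M L X)" ..
  fix A B assume A: "A \<in> sets (distr M N V)" and B: "B \<in> sets (distr M L X)"
  have "V -` A \<inter> space M \<in> sigma_sets (space M) {V -` A \<inter> space M | A. A \<in> sets N}"
    "X -` B \<inter> space M \<in> sigma_sets (space M) {X -` A \<inter> space M | A. A \<in> sets L}"
    using A B by (auto intro: sigma_sets.Basic)
  from indep_setD[OF indep this]
  have "emeasure M ((V -` A \<inter> space M) \<inter> (X -` B \<inter> space M))
      = emeasure M (V -` A \<inter> space M) * emeasure M (X -` B \<inter> space M)"
    by (simp add: emeasure_eq_measure ennreal_mult)
  moreover have "(\<lambda>w. (V w, X w)) -` (A \<times> B) \<inter> space M = (V -` A \<inter> space M) \<inter> (X -` B \<inter> space M)"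
    by auto
  ultimately show "emeasure (distr M N V) A * emeasure (distr M L X) B
      = emeasure (distr M (N \<Otimes>\<^sub>M L) (\<lambda>w. (V w, X w))) (A \<times> B)"
    using A B by (simp add: emeasure_distr[OF V] emeasure_distr[OF X] emeasure_distr[OF measurable_Pair[OF V X]])
qed simp

lemma (in prob_space) integral_indep_pair:
  fixes g :: "'b \<times> 'c \<Rightarrow> real"
  assumes V: "random_variable N V" and X: "random_variable L X"
    and indep: "indep_set (sigma_sets (space M) {V -` A \<inter> space M | A. A \<in> sets N})
                          (sigma_sets (space M) {X -` A \<inter> space M | A. A \<in> sets L})"
    and g: "integrable (distr M N V \<Otimes>\<^sub>M distr M L X) g"
  shows "(\<integral>w. g (V w, X w) \<partial>M) = (\<integral>w. (\<integral>x. g (V w, x) \<partial>distr M L X) \<partial>M)"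
proof -
  interpret PV: prob_space "distr M N V" by (rule prob_space_distr[OF V])
  interpret PX: prob_space "distr M L X" by (rule prob_space_distr[OF X])
  interpret PP: pair_prob_space "distr M N V" "distr M L X" ..
  note joint = distr_pair_eq_pair_measure[OF V X indep]
  have sets_eq: "sets (N \<Otimes>\<^sub>M distr M L X) = sets (distr M N V \<Otimes>\<^sub>M distr M L X)"
    by (intro sets_pair_measure_cong) auto
  have g_meas: "g \<in> borel_measurable (N \<Otimes>\<^sub>M distr M L X)"
    using borel_measurable_integrable[OF g] measurable_cong_sets[OF sets_eq refl] by blast
  have "sets (N \<Otimes>\<^sub>M L) = sets (distr M N V \<Otimes>\<^sub>M distr M L X)"
    by (intro sets_pair_measure_cong) auto
  then have g_meas_NL: "g \<in> borel_measurable (N \<Otimes>\<^sub>M L)"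
    using borel_measurable_integrable[OF g] measurable_cong_sets[OF _ refl] by blast
  have "(\<integral>w. g (V w, X w) \<partial>M) = integral\<^sup>L (distr M (N \<Otimes>\<^sub>M L) (\<lambda>w. (V w, X w))) g"
    by (rule integral_distr[OF measurable_Pair[OF V X] g_meas_NL, symmetric])
  also have "\<dots> = (\<integral>v. (\<integral>x. g (v, x) \<partial>distr M L X) \<partial>distr M N V)"
    using PP.integral_fst'[OF g] joint by simp
  also have "\<dots> = (\<integral>w. (\<integral>x. g (V w, x) \<partial>distr M L X) \<partial>M)"
    using PX.borel_measurable_lebesgue_integral[of "\<lambda>v x. g (v, x)" N] g_meas
    by (intro integral_distr[OF V]) simp
  finally show ?thesis .
qed

lemma (in prob_space) integral_if_uniform_less:
  fixes Z A1 A2 U :: "'a \<Rightarrow> real" and B :: real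
  assumes sub: "subalgebra M F"
    and meas: "Z \<in> borel_measurable F" "A1 \<in> borel_measurable F" "A2 \<in> borel_measurable F"
    and U: "U \<in> borel_measurable M" "distr M lborel U = uniform_measure lborel {0<..<1::real}"
    and indep: "indep_set (sets F) (sigma_sets (space M) {U -` A \<inter> space M | A. A \<in> sets borel})"
    and Z01: "\<And>w. w \<in> space M \<Longrightarrow> 0 \<le> Z w \<and> Z w \<le> 1"
    and bnd: "\<And>w. w \<in> space M \<Longrightarrow> \<bar>A1 w\<bar> \<le> B \<and> \<bar>A2 w\<bar> \<le> B"
  shows "(\<integral>w. (if U w < Z w then A1 w else A2 w) \<partial>M) = (\<integral>w. Z w * A1 w + (1 - Z w) * A2 w \<partial>M)"
proof -
  define V where "V w = (Z w, A1 w, A2 w)" for w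
  have VF: "V \<in> borel_measurable F" unfolding V_def using meas by measurable
  have V: "random_variable borel V" by (rule measurable_from_subalg[OF sub VF])
  have UL: "random_variable lborel U" using U(1) by simp
  have space_F: "space F = space M" using sub by (simp add: subalgebra_def)
  have "sigma_sets (space M) {V -` A \<inter> space M | A. A \<in> sets borel} \<subseteq> sets F"
    using measurable_sets[OF VF] sets.top[of F] space_F by (intro sets.sigma_sets_subset') auto
  then have indep_VU: "indep_set (sigma_sets (space M) {V -` A \<inter> space M | A. A \<in> sets borel})
      (sigma_sets (space M) {U -` A \<inter> space M | A. A \<in> sets lborel})"
    using indep by (auto simp: indep_sets2_eq)
  \<comment> \<open>Clipping to \<open>[-B, B]\<close> makes the integrand globally bounded without changing it on
    the range of \<open>V\<close>.\<close>
  define clip where "clip x = max (-B) (min B x)" for x :: real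
  have clip_id: "clip (A1 w) = A1 w" "clip (A2 w) = A2 w" if "w \<in> space M" for w
    using bnd[OF that] by (auto simp: clip_def abs_le_iff)
  define g :: "(real \<times> real \<times> real) \<times> real \<Rightarrow> real" where
    "g p = (if snd p < fst (fst p) then clip (fst (snd (fst p))) else clip (snd (snd (fst p))))" for p
  have [measurable]: "(\<lambda>p. snd p) \<in> borel_measurable borel" "(\<lambda>p. fst (fst p)) \<in> borel_measurable borel"
    "(\<lambda>p. fst (snd (fst p))) \<in> borel_measurable borel" "(\<lambda>p. snd (snd (fst p))) \<in> borel_measurable borel"
    for p :: "(real \<times> real \<times> real) \<times> real"
    by (auto intro!: borel_measurable_continuous_onI continuous_intros)
  have "g \<in> borel_measurable borel"
    unfolding g_def[abs_def] clip_def by measurable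
  then have g_meas: "g \<in> borel_measurable (borel \<Otimes>\<^sub>M lborel)"
    by (simp add: measurable_cong_sets[OF sets_pair_measure_cong[OF refl sets_lborel] refl] borel_prod)
  interpret PP: pair_prob_space "distr M borel V" "distr M lborel U"
    by (intro pair_prob_space.intro pair_sigma_finite.intro prob_space_distr
        prob_space_imp_sigma_finite V UL)
  have g_int: "integrable (distr M borel V \<Otimes>\<^sub>M distr M lborel U) g"
    using g_meas by (intro PP.P.integrable_const_bound[where B="\<bar>B\<bar>"]) (auto simp: g_def clip_def)
  have "(\<integral>w. (if U w < Z w then A1 w else A2 w) \<partial>M) = (\<integral>w. g (V w, U w) \<partial>M)"
    by (intro Bochner_Integration.integral_cong) (auto simp: g_def V_def clip_id)
  also have "\<dots> = (\<integral>w. (\<integral>t. g (V w, t) \<partial>distr M lborel U) \<partial>M)"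
    by (rule integral_indep_pair[OF V UL indep_VU g_int])
  also have "\<dots> = (\<integral>w. Z w * A1 w + (1 - Z w) * A2 w \<partial>M)"
  proof (intro Bochner_Integration.integral_cong refl)
    fix w assume w: "w \<in> space M"
    have "(\<lambda>t. g (V w, t)) = (\<lambda>t. if t < Z w then A1 w else A2 w)"
      using clip_id[OF w] by (auto simp: g_def V_def fun_eq_iff)
    then show "(\<integral>t. g (V w, t) \<partial>distr M lborel U) = Z w * A1 w + (1 - Z w) * A2 w"
      using U(2) Z01[OF w] by (simp add: integral_uniform_if_less)
  qed
  finally show ?thesis .
qed

section \<open>Real inequalities and recursive bounds\<close>

lemma powr_neg_diff_ge:
  fixes t a j y0 :: real
  assumes "0 < y0" "y0 \<le> t" "0 < a" "0 < j"
  shows "a * j * (1 + a / y0) powr (-j-1) * t powr (-j-1) \<le> t powr (-j) - (t + a) powr (-j)"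
proof -
  have t: "0 < t" using assms by linarith
  have "\<exists>z. t < z \<and> z < t + a \<and> (t + a) powr (-j) - t powr (-j) = ((t + a) - t) * ((-j) * z powr (-j - 1))"
  proof (rule MVT2)
    fix x assume "t \<le> x" "x \<le> t + a"
    then have "0 < x" using t by linarith
    then show "((\<lambda>x. x powr (-j)) has_real_derivative (-j) * x powr (-j - 1)) (at x)"
      by (rule has_real_derivative_powr)
  qed (use assms in simp)
  then obtain z where z: "t < z" "z < t + a" "(t + a) powr (-j) - t powr (-j) = a * ((-j) * z powr (-j - 1))"
    by auto
  have "t + a \<le> (1 + a / y0) * t"
    using assms mult_left_mono[of y0 t "a / y0"] by (simp add: algebra_simps)
  then have "((1 + a / y0) * t) powr (-j-1) \<le> z powr (-j-1)"
    using z t assms by (intro powr_mono2') auto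
  then have "a * j * ((1 + a / y0) powr (-j-1) * t powr (-j-1)) \<le> a * j * z powr (-j-1)"
    using t assms by (intro mult_left_mono) (auto simp: powr_mult)
  then show ?thesis using z(3) by (simp add: algebra_simps)
qed

lemma powr_neg_le_split:
  fixes t m l j :: real
  assumes "0 < t" "0 < m" "0 < l" "0 < j"
  shows "t powr (-j) \<le> l * m * t powr (-j-1) + (l * m) powr (-j)"
proof (cases "t \<le> l * m")
  case True
  have "t powr (-j) = t * t powr (-j-1)"
    using assms powr_add[of t 1 "-j-1"] by simp
  also have "\<dots> \<le> l * m * t powr (-j-1)" using True by (intro mult_right_mono) auto
  finally show ?thesis by (simp add: add_increasing2)
next
  case False
  then have "t powr (-j) \<le> (l * m) powr (-j)"
    using assms by (intro powr_mono2') auto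
  then show ?thesis using assms by (simp add: add_increasing)
qed

lemma ratio_powr_le_1_plus:
  fixes s t j J :: real
  assumes "0 \<le> s" "0 < t" "0 < j" "j \<le> J"
  shows "(s / t) powr j \<le> 1 + s powr J * t powr (-J)"
proof -
  have "(s / t) powr j \<le> 1 + (s / t) powr J"
  proof (cases "s / t \<le> 1")
    case True
    then have "(s / t) powr j \<le> 1 powr j" using assms by (intro powr_mono2) auto
    then show ?thesis by (simp add: add_increasing2)
  next
    case False
    then have "(s / t) powr j \<le> (s / t) powr J" using assms by (intro powr_mono) auto
    then show ?thesis by simp
  qed
  also have "(s / t) powr J = s powr J / t powr J"
    using assms by (simp add: powr_divide)
  also have "\<dots> = s powr J * t powr (-J)"
    by (simp add: powr_minus divide_inverse)
  finally show ?thesis .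
qed

lemma inverse_power_Bernoulli_step:
  fixes n J :: nat
  shows "(real n + 1) powr (- real J) * (1 - real J / (real n + 2)) \<le> (real n + 2) powr (- real J)"
proof -
  have "1 + real J * (- 1 / (real n + 2)) \<le> (1 + - 1 / (real n + 2)) ^ J"
    by (rule Bernoulli_inequality) (simp add: field_simps)
  then have "1 - real J / (real n + 2) \<le> ((real n + 1) / (real n + 2)) ^ J"
    by (simp add: field_simps)
  moreover have "(real n + 1) powr (- real J) * ((real n + 1) / (real n + 2)) ^ J
      = (real n + 2) powr (- real J)"
    by (simp add: powr_minus_divide powr_realpow power_divide field_simps)
  ultimately show ?thesis by (metis mult_left_mono powr_ge_zero)
qed

lemma dissipation_step:
  fixes x x' e c C m :: real and J :: nat
  assumes c: "0 < c" and J: "1 \<le> J" and m: "0 < m"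
    and dissip: "x' \<le> x - c * e"
    and split: "\<And>l. 0 < l \<Longrightarrow> x \<le> l * e + l powr (- real J) * C"
    and large: "2 * (2 * real J / c) ^ J * C * m powr (- real J) < x"
  shows "x' \<le> x * (1 - real J / m)"
proof -
  define \<kappa> where "\<kappa> = 2 * real J / c"
  have \<kappa>: "0 < \<kappa>" using J c by (simp add: \<kappa>_def)
  \<comment> \<open>At \<open>l = m / \<kappa>\<close> the second term of the splitting bound is below \<open>x / 2\<close>.\<close>
  have "x \<le> m / \<kappa> * e + (m / \<kappa>) powr (- real J) * C"
    using \<kappa> m by (intro split) simp
  also have "(m / \<kappa>) powr (- real J) = \<kappa> ^ J * m powr (- real J)"
    using \<kappa> m by (simp add: powr_divide powr_minus_divide powr_realpow divide_simps)
  finally have "x \<le> m / \<kappa> * e + x / 2"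
    using large unfolding \<kappa>_def by (simp add: mult_ac)
  then have "x * \<kappa> / (2 * m) \<le> e"
    using \<kappa> m by (simp add: field_simps)
  then have "c * (x * \<kappa> / (2 * m)) \<le> c * e"
    using c by (intro mult_left_mono) auto
  moreover have "c * (x * \<kappa> / (2 * m)) = x * (real J / m)"
    using c m by (simp add: \<kappa>_def field_simps)
  ultimately show ?thesis using dissip by (simp add: right_diff_distrib)
qed

lemma decay_from_dissipation:
  fixes x e :: "nat \<Rightarrow> real" and c C :: real and J :: nat
  assumes J: "1 \<le> J" and c: "0 < c" and C: "0 \<le> C"
    and x0: "\<And>n. 0 \<le> x n" and e0: "\<And>n. 0 \<le> e n"
    and dissip: "\<And>n. x (Suc n) \<le> x n - c * e n"
    and split: "\<And>n l. 0 < l \<Longrightarrow> x n \<le> l * e n + l powr (- real J) * C"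
  shows "\<exists>A. \<forall>n. x n \<le> A * (real n + 1) powr (- real J)"
proof -
  define A where "A = max (x 0) (2 * (2 * real J / c) ^ J * C)"
  have A0: "0 \<le> A" using x0[of 0] by (simp add: A_def)
  have "x n \<le> A * (real n + 1) powr (- real J)" for n
  proof (induction n)
    case 0
    then show ?case by (simp add: A_def)
  next
    case (Suc n)
    have "x (Suc n) \<le> A * (real n + 2) powr (- real J)"
    proof (cases "x n \<le> A * (real n + 2) powr (- real J)")
      case True
      then show ?thesis using dissip[of n] e0[of n] c by (smt (verit) mult_nonneg_nonneg)
    next
      case False
      have "2 * (2 * real J / c) ^ J * C * (real n + 2) powr (- real J) \<le> A * (real n + 2) powr (- real J)"
        by (simp add: A_def mult_right_mono)
      with False have "2 * (2 * real J / c) ^ J * C * (real n + 2) powr (- real J) < x n"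
        by linarith
      then have xt: "x (Suc n) \<le> x n * (1 - real J / (real n + 2))"
        using dissipation_step[OF c J _ dissip split] by simp
      show ?thesis
      proof (cases "1 - real J / (real n + 2) \<le> 0")
        case True
        then show ?thesis using xt x0[of n] A0 by (smt (verit) mult_nonneg_nonneg mult_nonneg_nonpos powr_ge_zero)
      next
        case False
        then have "x (Suc n) \<le> A * ((real n + 1) powr (- real J) * (1 - real J / (real n + 2)))"
          using xt Suc by (smt (verit) mult.assoc mult_right_mono)
        also have "\<dots> \<le> A * (real n + 2) powr (- real J)"
          using A0 inverse_power_Bernoulli_step by (rule mult_left_mono[rotated])
        finally show ?thesis .
      qed
    qed
    then show ?case by (simp add: add.commute)
  qed
  then show ?thesis by blast
qed

lemma bounded_partial_sums_if_tail_summable: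
  fixes p B :: "nat \<Rightarrow> real" and c e :: real
  assumes p: "\<And>k. 0 \<le> p k \<and> p k \<le> 1" and B: "\<And>k. 0 \<le> B k"
    and tail: "\<And>k. N \<le> k \<Longrightarrow> p k \<le> c * exp (- real k * e)"
    and summable: "summable (\<lambda>k. c * exp (- real k * e) * B k)"
  shows "\<exists>S. \<forall>n. (\<Sum>k<n. p k * B k) \<le> S"
proof -
  define G where "G k = (if k < N then B k else c * exp (- real k * e) * B k)" for k
  have "summable G"
  proof (subst summable_cong)
    show "eventually (\<lambda>k. G k = c * exp (- real k * e) * B k) sequentially"
      unfolding G_def eventually_sequentially by (intro exI[of _ N]) auto
  qed (rule summable)
  have pG: "p k * B k \<le> G k" for k
    using p[of k] B[of k] tail[of k] by (auto simp: G_def mult_left_le_one_le mult_right_mono)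
  have "(\<Sum>k<n. p k * B k) \<le> suminf G" for n
  proof -
    have "(\<Sum>k<n. p k * B k) \<le> (\<Sum>k<n. G k)" by (intro sum_mono pG)
    also have "\<dots> \<le> suminf G"
      using pG p B by (intro sum_le_suminf[OF \<open>summable G\<close>]) (auto intro: order_trans[OF mult_nonneg_nonneg])
    finally show ?thesis .
  qed
  then show ?thesis by blast
qed

lemma summable_exp_times_powr_linear:
  fixes e A B j :: real assumes "0 < e" "0 < A" "0 < B"
  shows "summable (\<lambda>k::nat. exp (- real k * e) * (A + (real k + 1) * B) powr j)"
proof (rule summable_comparison_test_bigo)
  show "summable (\<lambda>n::nat. norm (real n powr (-2)))" using summable_real_powr_iff[of "-2"] by simp
  show "(\<lambda>k::nat. exp (- real k * e) * (A + (real k + 1) * B) powr j) \<in> O(\<lambda>n. real n powr (-2))"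
    using assms by real_asymp
qed

lemma powr_le_exceedance_sum:
  fixes R Bd :: "nat \<Rightarrow> real" and bad :: "nat \<Rightarrow> bool" and K j :: real
  assumes R_pos: "\<And>n. 0 < R n" and R0: "R 0 \<le> K" and j: "0 < j"
    and step: "\<And>n. \<not> bad n \<Longrightarrow> R (Suc n) \<le> max (R n) K"
    and jump: "\<And>n. R (Suc n) \<le> Bd n"
  shows "R n powr j \<le> K powr j + (\<Sum>k<n. of_bool (bad k) * Bd k powr j)"
proof (induction n)
  case 0
  show ?case using R_pos[of 0] R0 j by (simp add: powr_mono2)
next
  case (Suc n)
  have sum_nonneg: "0 \<le> (\<Sum>k<n. of_bool (bad k) * Bd k powr j)"
    by (intro sum_nonneg) simp
  show ?case
  proof (cases "bad n")
    case True
    have "R (Suc n) powr j \<le> Bd n powr j"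
      using R_pos[of "Suc n"] jump[of n] j by (intro powr_mono2) auto
    then show ?thesis using True sum_nonneg by (simp add: add_increasing)
  next
    case False
    have "R (Suc n) powr j \<le> max (R n) K powr j"
      using R_pos[of "Suc n"] step[OF False] j by (intro powr_mono2) auto
    also have "\<dots> \<le> max (R n powr j) (K powr j)"
      by (auto simp: max_def)
    finally show ?thesis using Suc sum_nonneg False by simp
  qed
qed

lemma total_over_part_step_le:
  fixes y1 y2 d1 d2 b y0 th :: real
  assumes "0 < y1" "0 < y2" "0 < y0" "y0 \<le> y1 + y2" "0 \<le> d1" "0 \<le> d2" "d2 \<le> b"
    and "d1 = 0 \<or> d2 = 0" "0 < d2 \<Longrightarrow> th \<le> y1 / (y1 + y2)" "0 < th"
  shows "(y1 + y2 + d1 + d2) / (y1 + d1) \<le> max ((y1 + y2) / y1) ((1 + b / y0) / th)"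
proof (cases "d2 = 0")
  case True
  then have "(y1 + y2 + d1 + d2) / (y1 + d1) \<le> (y1 + y2) / y1"
    using assms by (simp add: field_simps)
  then show ?thesis by simp
next
  case False
  then have d: "d1 = 0" "0 < d2" using assms by auto
  have th: "th * (y1 + y2) \<le> y1" using assms(9)[OF d(2)] assms by (simp add: field_simps)
  have "b \<le> (y1 + y2) * (b / y0)"
    using assms mult_left_mono[of y0 "y1 + y2" b] by (simp add: field_simps)
  then have "y1 + y2 + d2 \<le> (y1 + y2) * (1 + b / y0)"
    using assms by (simp add: algebra_simps)
  also have "\<dots> = th * (y1 + y2) * ((1 + b / y0) / th)"
    using assms by simp
  also have "\<dots> \<le> y1 * ((1 + b / y0) / th)"
    using assms by (intro mult_right_mono[OF th]) auto
  finally have "(y1 + y2 + d2) / y1 \<le> (1 + b / y0) / th"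
    using assms by (simp add: pos_divide_le_eq mult.commute)
  then show ?thesis using d by simp
qed

lemma (in prob_space) powr_moments_bounded_if_exceedances_rare:
  fixes R :: "nat \<Rightarrow> 'a \<Rightarrow> real" and bad :: "nat \<Rightarrow> 'a set"
  assumes R_meas: "\<And>n. R n \<in> borel_measurable M" and bad: "\<And>k. bad k \<in> events"
    and R_pos: "\<And>n w. w \<in> space M \<Longrightarrow> 0 < R n w"
    and R_lin: "\<And>n w. w \<in> space M \<Longrightarrow> R n w \<le> A + real n * B"
    and R0: "\<And>w. w \<in> space M \<Longrightarrow> R 0 w \<le> K"
    and R_step: "\<And>n w. w \<in> space M \<Longrightarrow> w \<notin> bad n \<Longrightarrow> R (Suc n) w \<le> max (R n w) K"
    and tail: "\<And>k. N \<le> k \<Longrightarrow> prob (bad k) \<le> c * exp (- real k * e)"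
    and pos: "0 < e" "0 < A" "0 < B" "0 < j"
  shows "\<exists>C. \<forall>n. (\<integral>w. R n w powr j \<partial>M) \<le> C"
proof -
  define Bd where "Bd k = (A + (real k + 1) * B) powr j" for k
  have path: "R n w powr j \<le> K powr j + (\<Sum>k<n. indicator (bad k) w * Bd k)"
    if w: "w \<in> space M" for n w
  proof -
    have "R (Suc k) w \<le> A + (real k + 1) * B" for k
      using R_lin[OF w, of "Suc k"] by (simp add: add_ac)
    from powr_le_exceedance_sum[of "\<lambda>n. R n w", OF R_pos[OF w] R0[OF w] pos(4) R_step[OF w] this]
    show ?thesis by (simp add: Bd_def indicator_def)
  qed
  have "summable (\<lambda>k. c * (exp (- real k * e) * Bd k))"
    unfolding Bd_def using pos by (intro summable_mult summable_exp_times_powr_linear)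
  then obtain S where S: "\<And>n. (\<Sum>k<n. prob (bad k) * Bd k) \<le> S"
    using bounded_partial_sums_if_tail_summable[of "\<lambda>k. prob (bad k)" Bd N c e] tail
    by (auto simp: Bd_def mult.assoc)
  have ind: "integrable M (\<lambda>w. indicator (bad k) w * Bd k)" for k
    using bad by (intro integrable_mult_left integrable_real_indicator) (auto simp: less_top[symmetric])
  have "(\<integral>w. R n w powr j \<partial>M) \<le> K powr j + S" for n
  proof -
    have "R n w powr j \<le> (A + real n * B) powr j" if "w \<in> space M" for w
      using R_pos[OF that, of n] R_lin[OF that, of n] pos(4) by (intro powr_mono2) auto
    then have "integrable M (\<lambda>w. R n w powr j)"
      using R_meas by (intro integrable_const_bound[where B="(A + real n * B) powr j"] AE_I2) auto
    then have "(\<integral>w. R n w powr j \<partial>M) \<le> (\<integral>w. K powr j + (\<Sum>k<n. indicator (bad k) w * Bd k) \<partial>M)"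
      using path by (intro integral_mono Bochner_Integration.integrable_add integrable_const
          Bochner_Integration.integrable_sum ind) auto
    also have "\<dots> = K powr j + (\<Sum>k<n. (\<integral>w. indicator (bad k) w * Bd k \<partial>M))"
      by (simp only: Bochner_Integration.integral_add[OF integrable_const Bochner_Integration.integrable_sum[OF ind]]
          Bochner_Integration.integral_sum[OF ind] lebesgue_integral_const prob_space scaleR_one)
    also have "\<dots> = K powr j + (\<Sum>k<n. prob (bad k) * Bd k)"
      using bad by (simp add: Int_absorb2 sets.sets_into_space)
    also have "\<dots> \<le> K powr j + S" using S by simp
    finally show ?thesis .
  qed
  then show ?thesis by blast
qed

section \<open>The ARRU model\<close>

locale arru =
  fixes M :: "'w measure" and S :: "'s measure" and u :: "'s \<Rightarrow> real" and a b :: real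
    and xi1 xi2 :: "nat \<Rightarrow> 'w \<Rightarrow> 's" and U :: "nat \<Rightarrow> 'w \<Rightarrow> real"
    and y10 y20 :: real and r1 r2 :: "nat \<Rightarrow> 'w \<Rightarrow> real" and rho1 rho2 :: real
  assumes M: "prob_space M"
    and ab: "0 < a" "a \<le> b"
    and u_meas: "u \<in> borel_measurable S"
    and u_range: "\<forall>s\<in>space S. a \<le> u s \<and> u s \<le> b"
    and xi1_meas: "\<forall>n\<ge>1. xi1 n \<in> measurable M S"
    and xi2_meas: "\<forall>n\<ge>1. xi2 n \<in> measurable M S"
    and U_meas: "\<forall>n\<ge>1. U n \<in> borel_measurable M"
    and U_distr: "\<forall>n\<ge>1. distr M lborel (U n) = uniform_measure lborel {0<..<1::real}"
    and indep: "prob_space.indep_sets M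
        (\<lambda>(k, n). if k = (0::nat) then {xi1 n -` A \<inter> space M | A. A \<in> sets S}
                  else if k = 1 then {xi2 n -` A \<inter> space M | A. A \<in> sets S}
                  else {U n -` A \<inter> space M | A. A \<in> sets (borel :: real measure)})
        ({0, 1, 2} \<times> {1..})"
    and init_pos: "0 < y10" "0 < y20"
    and r_meas: "\<forall>n. r1 n \<in> borel_measurable (arru_F M S u xi1 xi2 U r1 r2 y10 y20 n)
                   \<and> r2 n \<in> borel_measurable (arru_F M S u xi1 xi2 U r1 r2 y10 y20 n)"
    and r_order: "\<forall>n. AE w in M. r2 n w \<le> r1 n w"
    and rho: "0 < rho2" "rho1 < 1"
    and condE1: "\<forall>\<epsilon>>0. \<exists>c1>0. \<exists>N. \<forall>n\<ge>N.
        measure M {w \<in> space M. \<bar>r1 n w - rho1\<bar> > \<epsilon>} \<le> c1 * exp (- real n * \<epsilon>\<^sup>2)"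
    and condE2: "\<forall>\<epsilon>>0. \<exists>c1>0. \<exists>N. \<forall>n\<ge>N.
        measure M {w \<in> space M. \<bar>r2 n w - rho2\<bar> > \<epsilon>} \<le> c1 * exp (- real n * \<epsilon>\<^sup>2)"
begin

sublocale P: prob_space M by (rule M)

definition "Y1 n w = fst (arru_Y u xi1 xi2 U r1 r2 y10 y20 n w)"
definition "Y2 n w = snd (arru_Y u xi1 xi2 U r1 r2 y10 y20 n w)"
definition "T n w = Y1 n w + Y2 n w"
definition "Z n w = Y1 n w / T n w"
definition "W1 n w = (if Z n w \<le> r1 n w then 1 else (0::real))"
definition "W2 n w = (if r2 n w \<le> Z n w then 1 else (0::real))"
definition "inc1 n w = (if U (Suc n) w < Z n w then u (xi1 (Suc n) w) * W1 n w else 0)"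
definition "inc2 n w = (if U (Suc n) w < Z n w then 0 else u (xi2 (Suc n) w) * W2 n w)"

lemma arru_Ytot_eq_T: "arru_Ytot u xi1 xi2 U r1 r2 y10 y20 n w = T n w"
  by (simp add: arru_Ytot_def T_def Y1_def Y2_def)

lemma arru_Z_eq_Z: "arru_Z u xi1 xi2 U r1 r2 y10 y20 n w = Z n w"
  by (simp add: arru_Z_def arru_Ytot_eq_T Z_def Y1_def)

lemma Y1_0 [simp]: "Y1 0 w = y10" and Y2_0 [simp]: "Y2 0 w = y20"
  by (simp_all add: Y1_def Y2_def)

lemma Y1_Suc: "Y1 (Suc n) w = Y1 n w + inc1 n w"
  and Y2_Suc: "Y2 (Suc n) w = Y2 n w + inc2 n w"
  by (simp_all add: Y1_def Y2_def Z_def T_def W1_def W2_def inc1_def inc2_def Let_def case_prod_beta)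

text \<open>The whole history up to time \<open>n\<close> is measurable with respect to \<open>Draws n\<close>, and
  \<open>U (Suc n)\<close> is independent of it.\<close>

definition "draw_events = (\<lambda>(k, n). if k = (0::nat) then {xi1 n -` A \<inter> space M | A. A \<in> sets S}
                  else if k = 1 then {xi2 n -` A \<inter> space M | A. A \<in> sets S}
                  else {U n -` A \<inter> space M | A. A \<in> sets (borel :: real measure)})"

definition "Draws n = sigma (space M) (\<Union>i\<in>{0,1,2::nat}\<times>{1..n}. draw_events i)"

lemma draw_events_subset: "draw_events i \<subseteq> Pow (space M)"
  unfolding draw_events_def by (auto split: prod.split)

lemma space_Draws [simp]: "space (Draws n) = space M"
  unfolding Draws_def using draw_events_subset by (intro space_measure_of) blast

lemma sets_Draws: "sets (Draws n) = sigma_sets (space M) (\<Union>i\<in>{0,1,2::nat}\<times>{1..n}. draw_events i)"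
  unfolding Draws_def using draw_events_subset by (intro sets_measure_of) blast

lemma measurable_Draws_mono:
  assumes "k \<le> n" "f \<in> measurable (Draws k) N"
  shows "f \<in> measurable (Draws n) N"
proof -
  have "sets (Draws k) \<subseteq> sets (Draws n)"
    unfolding sets_Draws using assms(1) by (intro sigma_sets_mono' UN_mono) auto
  then show ?thesis using assms(2) measurable_mono[of N N "Draws k" "Draws n"] by auto
qed

lemma subalgebra_Draws: "subalgebra M (Draws n)"
proof -
  have "xi1 k \<in> measurable M S" "xi2 k \<in> measurable M S" "U k \<in> borel_measurable M" if "1 \<le> k" for k
    using xi1_meas xi2_meas U_meas that by auto
  then have "(\<Union>i\<in>{0,1,2::nat}\<times>{1..n}. draw_events i) \<subseteq> sets M"
    by (fastforce simp: draw_events_def split: if_splits intro: measurable_sets)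
  then have "sets (Draws n) \<subseteq> sets M"
    unfolding sets_Draws by (intro sets.sigma_sets_subset) auto
  then show ?thesis unfolding subalgebra_def by simp
qed

lemma measurable_DrawsI:
  assumes "f \<in> space M \<rightarrow> space N" "\<And>A. A \<in> sets N \<Longrightarrow> f -` A \<inter> space M \<in> draw_events i"
    and "i \<in> {0,1,2}\<times>{1..n}"
  shows "f \<in> measurable (Draws n) N"
  unfolding measurable_def using assms by (auto simp: sets_Draws intro!: sigma_sets.Basic)

lemma xi1_Draws: "1 \<le> k \<Longrightarrow> k \<le> n \<Longrightarrow> xi1 k \<in> measurable (Draws n) S"
  by (rule measurable_DrawsI[where i="(0,k)"]) (use xi1_meas in \<open>auto simp: draw_events_def measurable_def\<close>)

lemma xi2_Draws: "1 \<le> k \<Longrightarrow> k \<le> n \<Longrightarrow> xi2 k \<in> measurable (Draws n) S"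
  by (rule measurable_DrawsI[where i="(1,k)"]) (use xi2_meas in \<open>auto simp: draw_events_def measurable_def\<close>)

lemma U_Draws: "1 \<le> k \<Longrightarrow> k \<le> n \<Longrightarrow> U k \<in> borel_measurable (Draws n)"
  by (rule measurable_DrawsI[where i="(2,k)"]) (auto simp: draw_events_def)

lemma Z_Draws:
  assumes [measurable]: "Y1 k \<in> borel_measurable (Draws k)" "Y2 k \<in> borel_measurable (Draws k)"
  shows "Z k \<in> borel_measurable (Draws k)"
proof -
  have "Z k = (\<lambda>w. Y1 k w / (Y1 k w + Y2 k w))" by (auto simp: fun_eq_iff Z_def T_def)
  then show ?thesis by simp
qed

lemma sets_arru_F_subset_Draws:
  assumes hist: "\<And>k. k < n \<Longrightarrow> Y1 k \<in> borel_measurable (Draws k) \<and> Y2 k \<in> borel_measurable (Draws k)"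
  shows "sets (arru_F M S u xi1 xi2 U r1 r2 y10 y20 n) \<subseteq> sets (Draws n)"
proof -
  let ?X = "arru_X u xi1 xi2 U r1 r2 y10 y20" and ?O = "arru_obs u xi1 xi2 U r1 r2 y10 y20"
  have X: "?X i \<in> borel_measurable (Draws n)" if i: "i \<in> {1..n}" for i
  proof -
    have "Z (i - 1) \<in> borel_measurable (Draws (i - 1))"
      using hist[of "i - 1"] i by (intro Z_Draws) auto
    then have [measurable]: "Z (i - 1) \<in> borel_measurable (Draws n)" "U i \<in> borel_measurable (Draws n)"
      using i by (auto intro: measurable_Draws_mono[of "i - 1"] U_Draws)
    have X_eq: "?X i = (\<lambda>w. if U i w < Z (i - 1) w then 1 else 0)"
      using i by (auto simp: fun_eq_iff arru_X_def arru_Z_eq_Z)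
    show ?thesis unfolding X_eq by measurable
  qed
  have O: "?O i \<in> measurable (Draws n) S" if i: "i \<in> {1..n}" for i
  proof -
    have [measurable]: "?X i \<in> borel_measurable (Draws n)"
      "xi1 i \<in> measurable (Draws n) S" "xi2 i \<in> measurable (Draws n) S"
      using X[OF i] i by (auto intro: xi1_Draws xi2_Draws)
    show ?thesis unfolding arru_obs_def[abs_def] by measurable
  qed
  let ?G = "\<Union>i\<in>{1..n}. {?X i -` A \<inter> space M | A. A \<in> sets (borel :: real measure)}
      \<union> {?O i -` A \<inter> space M | A. A \<in> sets S}"
  have "?G \<subseteq> sets (Draws n)"
    using measurable_sets[OF X] measurable_sets[OF O] by fastforce
  moreover have "sets (arru_F M S u xi1 xi2 U r1 r2 y10 y20 n) = sigma_sets (space M) ?G"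
    unfolding arru_F_def by (intro sets_measure_of) auto
  ultimately show ?thesis using sets.sigma_sets_subset[of ?G "Draws n"] by simp
qed

lemma history_Draws:
  "Y1 n \<in> borel_measurable (Draws n) \<and> Y2 n \<in> borel_measurable (Draws n)
    \<and> r1 n \<in> borel_measurable (Draws n) \<and> r2 n \<in> borel_measurable (Draws n)"
proof (induction n rule: less_induct)
  case (less n)
  have "space (arru_F M S u xi1 xi2 U r1 r2 y10 y20 n) = space M"
    unfolding arru_F_def by (intro space_measure_of) auto
  with sets_arru_F_subset_Draws[of n] less r_meas
  have r: "r1 n \<in> borel_measurable (Draws n)" "r2 n \<in> borel_measurable (Draws n)"
    using measurable_mono[of borel borel "arru_F M S u xi1 xi2 U r1 r2 y10 y20 n" "Draws n"] by auto
  have "Y1 n \<in> borel_measurable (Draws n) \<and> Y2 n \<in> borel_measurable (Draws n)"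
  proof (cases n)
    case 0
    have "Y1 0 = (\<lambda>_. y10)" "Y2 0 = (\<lambda>_. y20)" by (simp_all add: fun_eq_iff)
    then show ?thesis using 0 by simp
  next
    case (Suc m)
    have [measurable]: "Y1 m \<in> borel_measurable (Draws (Suc m))" "Y2 m \<in> borel_measurable (Draws (Suc m))"
      "r1 m \<in> borel_measurable (Draws (Suc m))" "r2 m \<in> borel_measurable (Draws (Suc m))"
      "Z m \<in> borel_measurable (Draws (Suc m))" "U (Suc m) \<in> borel_measurable (Draws (Suc m))"
      "(\<lambda>w. u (xi1 (Suc m) w)) \<in> borel_measurable (Draws (Suc m))"
      "(\<lambda>w. u (xi2 (Suc m) w)) \<in> borel_measurable (Draws (Suc m))"
      using less[of m] Suc
      by (auto intro: measurable_Draws_mono[of m] Z_Draws U_Draws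
          measurable_compose[OF xi1_Draws u_meas] measurable_compose[OF xi2_Draws u_meas])
    have "Y1 (Suc m) \<in> borel_measurable (Draws (Suc m))"
      unfolding Y1_Suc[abs_def] inc1_def W1_def by measurable
    moreover have "Y2 (Suc m) \<in> borel_measurable (Draws (Suc m))"
      unfolding Y2_Suc[abs_def] inc2_def W2_def by measurable
    ultimately show ?thesis using Suc by simp
  qed
  with r show ?case by simp
qed

lemma Y1_Draws: "Y1 n \<in> borel_measurable (Draws n)" and Y2_Draws: "Y2 n \<in> borel_measurable (Draws n)"
  and r1_Draws: "r1 n \<in> borel_measurable (Draws n)" and r2_Draws: "r2 n \<in> borel_measurable (Draws n)"
  using history_Draws[of n] by auto

lemma indep_Draws_U:
  "P.indep_set (sets (Draws n)) (sigma_sets (space M) {U (Suc n) -` A \<inter> space M | A. A \<in> sets borel})"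
proof -
  define I where "I = (\<lambda>past::bool. if past then {0,1,2::nat}\<times>{1..n} else {(2::nat, Suc n)})"
  have "P.indep_sets draw_events (\<Union>past. I past)"
    by (rule P.indep_sets_mono_index[OF _ indep[folded draw_events_def]]) (auto simp: I_def)
  moreover have "Int_stable (draw_events i)" for i
  proof -
    have vimage: "Int_stable {f -` A \<inter> space M | A. A \<in> sets N}" for f :: "'w \<Rightarrow> 'b" and N
    proof (safe intro!: Int_stableI)
      fix A B assume "A \<in> sets N" "B \<in> sets N"
      then show "\<exists>C. (f -` A \<inter> space M) \<inter> (f -` B \<inter> space M) = f -` C \<inter> space M \<and> C \<in> sets N"
        by (intro exI[of _ "A \<inter> B"]) auto
    qed
    obtain k m where "i = (k, m)" by fastforce
    then show ?thesis unfolding draw_events_def by (simp add: vimage)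
  qed
  ultimately have "P.indep_sets (\<lambda>past. sigma_sets (space M) (\<Union>i\<in>I past. draw_events i)) UNIV"
    by (intro P.indep_sets_collect_sigma) (auto simp: disjoint_family_on_def I_def)
  moreover have "(\<lambda>past. sigma_sets (space M) (\<Union>i\<in>I past. draw_events i)) = case_bool (sets (Draws n))
      (sigma_sets (space M) {U (Suc n) -` A \<inter> space M | A. A \<in> sets borel})"
    by (auto simp: fun_eq_iff I_def sets_Draws draw_events_def split: bool.split)
  ultimately show ?thesis unfolding P.indep_set_def by simp
qed

lemma Y1_measurable [measurable]: "Y1 n \<in> borel_measurable M"
  and Y2_measurable [measurable]: "Y2 n \<in> borel_measurable M"
  and r1_measurable [measurable]: "r1 n \<in> borel_measurable M"
  and r2_measurable [measurable]: "r2 n \<in> borel_measurable M"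
  using measurable_from_subalg[OF subalgebra_Draws] Y1_Draws Y2_Draws r1_Draws r2_Draws by blast+

lemma T_measurable [measurable]: "T n \<in> borel_measurable M"
  and Z_measurable [measurable]: "Z n \<in> borel_measurable M"
  unfolding T_def[abs_def] Z_def[abs_def] by measurable

lemma u_xi_bounds:
  assumes "w \<in> space M" "1 \<le> k"
  shows "a \<le> u (xi1 k w)" "u (xi1 k w) \<le> b" "a \<le> u (xi2 k w)" "u (xi2 k w) \<le> b"
  using assms xi1_meas xi2_meas u_range measurable_space by metis+

lemma inc_bounds:
  assumes "w \<in> space M"
  shows "0 \<le> inc1 n w" "inc1 n w \<le> b" "0 \<le> inc2 n w" "inc2 n w \<le> b"
    and "inc1 n w = 0 \<or> inc2 n w = 0"
    and "0 < inc1 n w \<Longrightarrow> Z n w \<le> r1 n w" "0 < inc2 n w \<Longrightarrow> r2 n w \<le> Z n w"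
  using u_xi_bounds[OF assms, of "Suc n"] ab by (auto simp: inc1_def inc2_def W1_def W2_def split: if_splits)

definition "y0 = y10 + y20"

lemma Y_bounds:
  assumes "w \<in> space M"
  shows "y10 \<le> Y1 n w" "y20 \<le> Y2 n w" "y0 \<le> T n w" "T n w \<le> y0 + real n * b"
proof -
  have "y10 \<le> Y1 n w \<and> y20 \<le> Y2 n w \<and> T n w \<le> y0 + real n * b"
  proof (induction n)
    case (Suc n)
    then show ?case
      using inc_bounds[OF assms, of n] by (auto simp: Y1_Suc Y2_Suc T_def algebra_simps)
  qed (simp add: T_def y0_def)
  then show "y10 \<le> Y1 n w" "y20 \<le> Y2 n w" "T n w \<le> y0 + real n * b" "y0 \<le> T n w"
    by (auto simp: T_def y0_def)
qed

lemma y0_pos: "0 < y0"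
  using init_pos by (simp add: y0_def)

lemma Y_pos:
  assumes "w \<in> space M" shows "0 < Y1 n w" "0 < Y2 n w" "0 < T n w"
  using Y_bounds[OF assms, of n] init_pos y0_pos by auto

lemma Z_bounds:
  assumes "w \<in> space M" shows "0 < Z n w" "Z n w < 1" "1 - Z n w = Y2 n w / T n w"
  using Y_pos[OF assms, of n] by (auto simp: Z_def T_def field_simps)

definition "minfrac n w = min (Y1 n w) (Y2 n w) / T n w"

lemma minfrac_bounds:
  assumes "w \<in> space M" shows "0 < minfrac n w" "minfrac n w \<le> 1"
  using Y_pos[OF assms, of n] by (auto simp: minfrac_def T_def)

lemma minfrac_measurable [measurable]: "minfrac n \<in> borel_measurable M"
  unfolding minfrac_def[abs_def] by measurable

lemma minfrac_le_growth_probability: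
  assumes w: "w \<in> space M" and r: "r2 n w \<le> r1 n w"
  shows "minfrac n w \<le> Z n w * W1 n w + (1 - Z n w) * W2 n w"
proof -
  have "minfrac n w \<le> Y1 n w / T n w" "minfrac n w \<le> Y2 n w / T n w"
    using Y_pos[OF w, of n] unfolding minfrac_def by (auto intro!: divide_right_mono)
  then have "minfrac n w \<le> Z n w" "minfrac n w \<le> 1 - Z n w"
    using Z_bounds[OF w, of n] by (auto simp: Z_def)
  then show ?thesis using Z_bounds[OF w, of n] r by (auto simp: W1_def W2_def)
qed

lemma T_Suc_ge:
  assumes "w \<in> space M"
  shows "T n w + a * (if U (Suc n) w < Z n w then W1 n w else W2 n w) \<le> T (Suc n) w"
  using u_xi_bounds[OF assms, of "Suc n"]
  by (auto simp: T_def Y1_Suc Y2_Suc inc1_def inc2_def W1_def W2_def)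

lemma T_powr_bounds:
  assumes "w \<in> space M" "0 < j"
  shows "0 < T n w powr (-j)" "T n w powr (-j) \<le> y0 powr (-j)"
  using Y_pos[OF assms(1), of n] Y_bounds[OF assms(1), of n] y0_pos assms(2)
  by (auto intro!: powr_mono2')

lemma integrable_T_powr: "0 < j \<Longrightarrow> integrable M (\<lambda>w. T n w powr (-j))"
  using T_powr_bounds by (intro P.integrable_const_bound[OF AE_I2, where B="y0 powr (-j)"]) auto

lemma integrable_minfrac_T_powr: "0 < j \<Longrightarrow> integrable M (\<lambda>w. minfrac n w * T n w powr (-j-1))"
proof (intro P.integrable_const_bound[OF AE_I2, where B="y0 powr (-j-1)"])
  fix w assume w: "w \<in> space M" and "0 < j"
  have "T n w powr (-j-1) \<le> y0 powr (-j-1)"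
    using Y_pos[OF w, of n] Y_bounds[OF w, of n] y0_pos \<open>0 < j\<close> by (intro powr_mono2') auto
  then have "minfrac n w * T n w powr (-j-1) \<le> 1 * y0 powr (-j-1)"
    using minfrac_bounds[OF w, of n] by (intro mult_mono) auto
  then show "norm (minfrac n w * T n w powr (-j-1)) \<le> y0 powr (-j-1)"
    using minfrac_bounds[OF w, of n] by simp
qed measurable

definition "gain j n w = T n w powr (-j) - (T n w + a) powr (-j)"

lemma gain_bounds:
  assumes "w \<in> space M" "0 < j"
  shows "0 \<le> gain j n w" "gain j n w \<le> y0 powr (-j)"
proof -
  have "(T n w + a) powr (-j) \<le> T n w powr (-j)"
    using Y_pos[OF assms(1), of n] ab assms(2) by (intro powr_mono2') auto
  moreover have "0 \<le> (T n w + a) powr (-j)" by simp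
  ultimately show "0 \<le> gain j n w" "gain j n w \<le> y0 powr (-j)"
    using T_powr_bounds[OF assms, of n] unfolding gain_def by linarith+
qed

definition "descent_const j = a * j * (1 + a / y0) powr (-j-1)"

lemma descent_const_pos: "0 < j \<Longrightarrow> 0 < descent_const j"
proof -
  have "0 < 1 + a / y0" using ab y0_pos by (simp add: add_pos_nonneg)
  then show "0 < j \<Longrightarrow> 0 < descent_const j" using ab by (simp add: descent_const_def)
qed

text \<open>\<open>expected_gain\<close> is the conditional expectation of \<open>realised_gain\<close> given \<open>Draws n\<close>.\<close>

definition "realised_gain j n w =
  (if U (Suc n) w < Z n w then gain j n w * W1 n w else gain j n w * W2 n w)"

definition "expected_gain j n w = Z n w * (gain j n w * W1 n w) + (1 - Z n w) * (gain j n w * W2 n w)"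

lemma gain_W_bounds:
  assumes "w \<in> space M" "0 < j"
  shows "0 \<le> gain j n w * W1 n w" "gain j n w * W1 n w \<le> y0 powr (-j)"
    "0 \<le> gain j n w * W2 n w" "gain j n w * W2 n w \<le> y0 powr (-j)"
  using gain_bounds[OF assms, of n] by (auto simp: W1_def W2_def)

lemma gain_W_Draws:
  "(\<lambda>w. gain j n w * W1 n w) \<in> borel_measurable (Draws n)"
  "(\<lambda>w. gain j n w * W2 n w) \<in> borel_measurable (Draws n)"
proof -
  note [measurable] = Y1_Draws[of n] Y2_Draws[of n] r1_Draws[of n] r2_Draws[of n]
    Z_Draws[OF Y1_Draws Y2_Draws, of n]
  show "(\<lambda>w. gain j n w * W1 n w) \<in> borel_measurable (Draws n)"
    "(\<lambda>w. gain j n w * W2 n w) \<in> borel_measurable (Draws n)"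
    unfolding gain_def T_def W1_def W2_def by measurable
qed

lemma integrable_realised_gain: "0 < j \<Longrightarrow> integrable M (realised_gain j n)"
proof (intro P.integrable_const_bound[OF AE_I2, where B="y0 powr (-j)"])
  have [measurable]: "U (Suc n) \<in> borel_measurable M" using U_meas by simp
  note [measurable] = gain_W_Draws[THEN measurable_from_subalg[OF subalgebra_Draws]]
  show "realised_gain j n \<in> borel_measurable M"
    unfolding realised_gain_def[abs_def] by measurable
qed (use gain_W_bounds in \<open>auto simp: realised_gain_def\<close>)

lemma integrable_expected_gain: "0 < j \<Longrightarrow> integrable M (expected_gain j n)"
proof (intro P.integrable_const_bound[OF AE_I2, where B="y0 powr (-j)"])
  fix w assume w: "w \<in> space M" and j: "0 < j"
  have "0 \<le> expected_gain j n w" "expected_gain j n w \<le> y0 powr (-j)"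
    using gain_W_bounds[OF w j, of n] Z_bounds(1,2)[OF w, of n] unfolding expected_gain_def
    by (auto intro!: convex_bound_le add_nonneg_nonneg mult_nonneg_nonneg)
  then show "norm (expected_gain j n w) \<le> y0 powr (-j)" by simp
next
  note [measurable] = gain_W_Draws[THEN measurable_from_subalg[OF subalgebra_Draws]]
  show "expected_gain j n \<in> borel_measurable M"
    unfolding expected_gain_def[abs_def] by measurable
qed

lemma integral_realised_gain:
  assumes j: "0 < j"
  shows "(\<integral>w. realised_gain j n w \<partial>M) = (\<integral>w. expected_gain j n w \<partial>M)"
  unfolding realised_gain_def expected_gain_def
proof (rule P.integral_if_uniform_less[OF subalgebra_Draws _ gain_W_Draws, where B="y0 powr (-j)"])
  show "Z n \<in> borel_measurable (Draws n)" by (rule Z_Draws[OF Y1_Draws Y2_Draws])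
qed (use U_meas U_distr indep_Draws_U Z_bounds gain_W_bounds j in \<open>auto simp: less_imp_le\<close>)

lemma T_Suc_powr_le:
  assumes w: "w \<in> space M" and j: "0 < j"
  shows "T (Suc n) w powr (-j) \<le> T n w powr (-j) - realised_gain j n w"
proof -
  define G where "G = (if U (Suc n) w < Z n w then W1 n w else W2 n w)"
  have G: "G = 0 \<or> G = 1" by (auto simp: G_def W1_def W2_def)
  have "T (Suc n) w powr (-j) \<le> (T n w + a * G) powr (-j)"
    using T_Suc_ge[OF w, of n] Y_pos[OF w, of n] G ab j unfolding G_def by (intro powr_mono2') auto
  also have "(T n w + a * G) powr (-j) = T n w powr (-j) - G * gain j n w"
    using G by (auto simp: gain_def)
  finally show ?thesis by (auto simp: G_def realised_gain_def mult.commute)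
qed

lemma descent_le_expected_gain:
  assumes w: "w \<in> space M" and r: "r2 n w \<le> r1 n w" and j: "0 < j"
  shows "descent_const j * (minfrac n w * T n w powr (-j-1)) \<le> expected_gain j n w"
proof -
  have "descent_const j * T n w powr (-j-1) \<le> gain j n w"
    using powr_neg_diff_ge[of y0 "T n w" a j] Y_bounds[OF w, of n] y0_pos ab j
    by (simp add: descent_const_def gain_def)
  then have "minfrac n w * (descent_const j * T n w powr (-j-1)) \<le> minfrac n w * gain j n w"
    using minfrac_bounds[OF w, of n] by (intro mult_left_mono) auto
  also have "\<dots> \<le> (Z n w * W1 n w + (1 - Z n w) * W2 n w) * gain j n w"
    using minfrac_le_growth_probability[OF w r] gain_bounds[OF w j, of n] by (intro mult_right_mono) auto
  finally show ?thesis by (simp add: expected_gain_def algebra_simps)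
qed

lemma integral_T_Suc_powr_le:
  assumes j: "0 < j"
  shows "(\<integral>w. T (Suc n) w powr (-j) \<partial>M)
    \<le> (\<integral>w. T n w powr (-j) \<partial>M) - descent_const j * (\<integral>w. minfrac n w * T n w powr (-j-1) \<partial>M)"
proof -
  have "(\<integral>w. T (Suc n) w powr (-j) \<partial>M) \<le> (\<integral>w. T n w powr (-j) - realised_gain j n w \<partial>M)"
    using T_Suc_powr_le j by (intro integral_mono integrable_T_powr
        Bochner_Integration.integrable_diff integrable_realised_gain) auto
  also have "\<dots> = (\<integral>w. T n w powr (-j) \<partial>M) - (\<integral>w. expected_gain j n w \<partial>M)"
    using j by (simp add: Bochner_Integration.integral_diff integrable_T_powr integrable_realised_gain
        integral_realised_gain)
  also have "\<dots> \<le> (\<integral>w. T n w powr (-j) \<partial>M) - descent_const j * (\<integral>w. minfrac n w * T n w powr (-j-1) \<partial>M)"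
  proof (rule diff_left_mono)
    have "AE w in M. descent_const j * (minfrac n w * T n w powr (-j-1)) \<le> expected_gain j n w"
      using r_order[rule_format, of n] AE_space[of M] by eventually_elim (simp add: descent_le_expected_gain j)
    then show "descent_const j * (\<integral>w. minfrac n w * T n w powr (-j-1) \<partial>M) \<le> (\<integral>w. expected_gain j n w \<partial>M)"
      by (subst integral_mult_right_zero[symmetric])
        (intro integral_mono_AE integrable_mult_right integrable_minfrac_T_powr integrable_expected_gain j)
  qed
  finally show ?thesis .
qed

definition "R1 n w = T n w / Y1 n w"
definition "R2 n w = T n w / Y2 n w"

lemma R_measurable [measurable]: "R1 n \<in> borel_measurable M" "R2 n \<in> borel_measurable M"
  unfolding R1_def[abs_def] R2_def[abs_def] by measurable

lemma R_pos: "w \<in> space M \<Longrightarrow> 0 < R1 n w" "w \<in> space M \<Longrightarrow> 0 < R2 n w"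
  using Y_pos by (auto simp: R1_def R2_def)

lemma R_linear_bound:
  assumes "w \<in> space M"
  shows "R1 n w \<le> y0 / y10 + real n * (b / y10)" "R2 n w \<le> y0 / y20 + real n * (b / y20)"
proof -
  have "R1 n w \<le> (y0 + real n * b) / y10" "R2 n w \<le> (y0 + real n * b) / y20"
    using Y_bounds[OF assms, of n] Y_pos[OF assms, of n] init_pos unfolding R1_def R2_def
    by (auto intro!: frac_le)
  then show "R1 n w \<le> y0 / y10 + real n * (b / y10)" "R2 n w \<le> y0 / y20 + real n * (b / y20)"
    by (simp_all add: add_divide_distrib)
qed

text \<open>While \<open>r2 n \<ge> th\<close>, draws of the second colour are rejected as long as the fraction of the
  first is below \<open>th\<close>, so \<open>T / Y1\<close> cannot grow beyond a fixed level.\<close>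

lemma R1_Suc_le:
  assumes w: "w \<in> space M" and th: "0 < th" "th \<le> r2 n w"
  shows "R1 (Suc n) w \<le> max (R1 n w) ((1 + b / y0) / th)"
proof -
  have "(Y1 n w + Y2 n w + inc1 n w + inc2 n w) / (Y1 n w + inc1 n w)
      \<le> max ((Y1 n w + Y2 n w) / Y1 n w) ((1 + b / y0) / th)"
    using Y_pos[OF w, of n] Y_bounds[OF w, of n] inc_bounds[OF w, of n] y0_pos th
    by (intro total_over_part_step_le) (auto simp: Z_def T_def)
  then show ?thesis by (simp add: R1_def T_def Y1_Suc Y2_Suc add_ac)
qed

lemma R2_Suc_le:
  assumes w: "w \<in> space M" and th: "0 < th" "r1 n w \<le> 1 - th"
  shows "R2 (Suc n) w \<le> max (R2 n w) ((1 + b / y0) / th)"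
proof -
  have "(Y2 n w + Y1 n w + inc2 n w + inc1 n w) / (Y2 n w + inc2 n w)
      \<le> max ((Y2 n w + Y1 n w) / Y2 n w) ((1 + b / y0) / th)"
    using Y_pos[OF w, of n] Y_bounds[OF w, of n] inc_bounds[OF w, of n] y0_pos th Z_bounds(3)[OF w, of n]
    by (intro total_over_part_step_le) (auto simp: T_def add_ac)
  then show ?thesis by (simp add: R2_def T_def Y1_Suc Y2_Suc add_ac)
qed

lemma R1_moments_bounded:
  assumes j: "0 < j" shows "\<exists>C. \<forall>n. (\<integral>w. R1 n w powr j \<partial>M) \<le> C"
proof -
  define th where "th = rho2 / 2"
  have th: "0 < th" using rho by (simp add: th_def)
  obtain c N where tail: "\<And>n. N \<le> n \<Longrightarrow>
      measure M {w \<in> space M. \<bar>r2 n w - rho2\<bar> > th} \<le> c * exp (- real n * th\<^sup>2)"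
    using condE2 th by blast
  have bad_tail: "measure M {w \<in> space M. r2 k w < th} \<le> c * exp (- real k * th\<^sup>2)" if "N \<le> k" for k
  proof -
    have "{w \<in> space M. r2 k w < th} \<subseteq> {w \<in> space M. \<bar>r2 k w - rho2\<bar> > th}"
      using rho by (auto simp: th_def abs_if field_simps)
    then have "measure M {w \<in> space M. r2 k w < th} \<le> measure M {w \<in> space M. \<bar>r2 k w - rho2\<bar> > th}"
      by (intro P.finite_measure_mono) measurable
    then show ?thesis using tail[OF that] by simp
  qed
  have step: "R1 (Suc n) w \<le> max (R1 n w) (max (y0 / y10) ((1 + b / y0) / th))"
    if "w \<in> space M" "w \<notin> {w \<in> space M. r2 n w < th}" for n w
    using R1_Suc_le[OF that(1) th, of n] that by (auto simp: max_def split: if_splits)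
  have start: "R1 0 w \<le> max (y0 / y10) ((1 + b / y0) / th)" if "w \<in> space M" for w
    by (simp add: R1_def T_def y0_def)
  have bad_events: "{w \<in> space M. r2 k w < th} \<in> P.events" for k by measurable
  show ?thesis
    using P.powr_moments_bounded_if_exceedances_rare[OF R_measurable(1) bad_events R_pos(1)
        R_linear_bound(1) start step bad_tail] th init_pos y0_pos ab j by simp
qed

lemma R2_moments_bounded:
  assumes j: "0 < j" shows "\<exists>C. \<forall>n. (\<integral>w. R2 n w powr j \<partial>M) \<le> C"
proof -
  define th where "th = (1 - rho1) / 2"
  have th: "0 < th" using rho by (simp add: th_def)
  obtain c N where tail: "\<And>n. N \<le> n \<Longrightarrow>
      measure M {w \<in> space M. \<bar>r1 n w - rho1\<bar> > th} \<le> c * exp (- real n * th\<^sup>2)"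
    using condE1 th by blast
  have bad_tail: "measure M {w \<in> space M. 1 - th < r1 k w} \<le> c * exp (- real k * th\<^sup>2)" if "N \<le> k" for k
  proof -
    have "{w \<in> space M. 1 - th < r1 k w} \<subseteq> {w \<in> space M. \<bar>r1 k w - rho1\<bar> > th}"
      using rho by (auto simp: th_def abs_if field_simps)
    then have "measure M {w \<in> space M. 1 - th < r1 k w} \<le> measure M {w \<in> space M. \<bar>r1 k w - rho1\<bar> > th}"
      by (intro P.finite_measure_mono) measurable
    then show ?thesis using tail[OF that] by simp
  qed
  have step: "R2 (Suc n) w \<le> max (R2 n w) (max (y0 / y20) ((1 + b / y0) / th))"
    if "w \<in> space M" "w \<notin> {w \<in> space M. 1 - th < r1 n w}" for n w
    using R2_Suc_le[OF that(1) th, of n] that by (auto simp: max_def split: if_splits)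
  have start: "R2 0 w \<le> max (y0 / y20) ((1 + b / y0) / th)" if "w \<in> space M" for w
    by (simp add: R2_def T_def y0_def)
  have bad_events: "{w \<in> space M. 1 - th < r1 k w} \<in> P.events" for k by measurable
  show ?thesis
    using P.powr_moments_bounded_if_exceedances_rare[OF R_measurable(2) bad_events R_pos(2)
        R_linear_bound(2) start step bad_tail] th init_pos y0_pos ab j by simp
qed

lemma minfrac_powr_le:
  assumes w: "w \<in> space M" and j: "0 < j"
  shows "minfrac n w powr (-j) \<le> R1 n w powr j + R2 n w powr j"
proof -
  have "minfrac n w powr (-j) = (if Y1 n w \<le> Y2 n w then R1 n w powr j else R2 n w powr j)"
    using Y_pos[OF w, of n] by (simp add: minfrac_def R1_def R2_def powr_minus_divide powr_divide)
  then show ?thesis by simp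
qed

lemma integrable_R_powr:
  assumes j: "0 < j" shows "integrable M (\<lambda>w. R1 n w powr j)" "integrable M (\<lambda>w. R2 n w powr j)"
proof -
  have b1: "R1 n w powr j \<le> (y0 / y10 + real n * (b / y10)) powr j"
    and b2: "R2 n w powr j \<le> (y0 / y20 + real n * (b / y20)) powr j" if "w \<in> space M" for w
    using R_pos[OF that, of n] R_linear_bound[OF that, of n] j by (auto intro!: powr_mono2)
  show "integrable M (\<lambda>w. R1 n w powr j)"
    using b1 by (intro P.integrable_const_bound[OF AE_I2]) auto
  show "integrable M (\<lambda>w. R2 n w powr j)"
    using b2 by (intro P.integrable_const_bound[OF AE_I2]) auto
qed

lemma integrable_minfrac_powr:
  assumes j: "0 < j" shows "integrable M (\<lambda>w. minfrac n w powr (-j))"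
proof (rule Bochner_Integration.integrable_bound)
  show "integrable M (\<lambda>w. R1 n w powr j + R2 n w powr j)"
    using integrable_R_powr[OF j] by (rule Bochner_Integration.integrable_add)
  show "AE w in M. norm (minfrac n w powr (-j)) \<le> norm (R1 n w powr j + R2 n w powr j)"
    using minfrac_powr_le[OF _ j] by (intro AE_I2) (simp add: add_nonneg_nonneg)
qed measurable

lemma minfrac_moments_bounded:
  assumes j: "0 < j" shows "\<exists>C. \<forall>n. (\<integral>w. minfrac n w powr (-j) \<partial>M) \<le> C"
proof -
  obtain C1 C2 where C1: "\<And>n. (\<integral>w. R1 n w powr j \<partial>M) \<le> C1" and C2: "\<And>n. (\<integral>w. R2 n w powr j \<partial>M) \<le> C2"
    using R1_moments_bounded[OF j] R2_moments_bounded[OF j] by blast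
  have "(\<integral>w. minfrac n w powr (-j) \<partial>M) \<le> (\<integral>w. R1 n w powr j + R2 n w powr j \<partial>M)" for n
    using minfrac_powr_le[OF _ j] integrable_R_powr[OF j] integrable_minfrac_powr[OF j]
    by (intro integral_mono Bochner_Integration.integrable_add) auto
  also have "(\<integral>w. R1 n w powr j + R2 n w powr j \<partial>M) \<le> C1 + C2" for n
    using C1[of n] C2[of n] by (simp add: Bochner_Integration.integral_add integrable_R_powr[OF j])
  finally show ?thesis by blast
qed

lemma integral_T_powr_split:
  assumes j: "0 < j" and l: "0 < l"
  shows "(\<integral>w. T n w powr (-j) \<partial>M)
    \<le> l * (\<integral>w. minfrac n w * T n w powr (-j-1) \<partial>M) + l powr (-j) * (\<integral>w. minfrac n w powr (-j) \<partial>M)"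
proof -
  have "T n w powr (-j) \<le> l * (minfrac n w * T n w powr (-j-1)) + l powr (-j) * minfrac n w powr (-j)"
    if w: "w \<in> space M" for w
    using powr_neg_le_split[of "T n w" "minfrac n w" l j] Y_pos[OF w, of n] minfrac_bounds[OF w, of n] l j
    by (simp add: powr_mult mult.assoc)
  moreover have int1: "integrable M (\<lambda>w. l * (minfrac n w * T n w powr (-j-1)))"
    and int2: "integrable M (\<lambda>w. l powr (-j) * minfrac n w powr (-j))"
    using integrable_minfrac_T_powr[OF j] integrable_minfrac_powr[OF j] by auto
  ultimately have "(\<integral>w. T n w powr (-j) \<partial>M)
      \<le> (\<integral>w. l * (minfrac n w * T n w powr (-j-1)) + l powr (-j) * minfrac n w powr (-j) \<partial>M)"
    by (intro integral_mono integrable_T_powr[OF j] Bochner_Integration.integrable_add int1 int2) auto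
  then show ?thesis by (simp add: Bochner_Integration.integral_add[OF int1 int2])
qed

lemma T_inverse_moment_decay:
  fixes J :: nat assumes J: "1 \<le> J"
  shows "\<exists>A\<ge>0. \<forall>n. (\<integral>w. T n w powr (- real J) \<partial>M) \<le> A * (real n + 1) powr (- real J)"
proof -
  define j where "j = real J"
  have j: "0 < j" using J by (simp add: j_def)
  obtain C where C: "\<And>n. (\<integral>w. minfrac n w powr (-j) \<partial>M) \<le> C"
    using minfrac_moments_bounded[OF j] by blast
  have "0 \<le> (\<integral>w. minfrac 0 w powr (-j) \<partial>M)"
    by (simp add: Bochner_Integration.integral_nonneg)
  then have C0: "0 \<le> C" using C[of 0] by linarith
  define x where "x n = (\<integral>w. T n w powr (-j) \<partial>M)" for n
  define e where "e n = (\<integral>w. minfrac n w * T n w powr (-j-1) \<partial>M)" for n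
  have x0: "0 \<le> x n" for n unfolding x_def by (simp add: Bochner_Integration.integral_nonneg)
  have e0: "0 \<le> e n" for n
    unfolding e_def using minfrac_bounds by (intro Bochner_Integration.integral_nonneg) (simp add: less_imp_le)
  have dissip: "x (Suc n) \<le> x n - descent_const j * e n" for n
    unfolding x_def e_def by (rule integral_T_Suc_powr_le[OF j])
  have split: "x n \<le> l * e n + l powr (- real J) * C" if l: "0 < l" for n l
    using integral_T_powr_split[OF j l, of n] mult_left_mono[OF C[of n], of "l powr (-j)"]
    unfolding x_def e_def j_def by simp
  obtain A where A: "\<And>n. x n \<le> A * (real n + 1) powr (- real J)"
    using decay_from_dissipation[of J "descent_const j" C x e, OF J descent_const_pos[OF j] C0 x0 e0 dissip split]
    by blast
  moreover have "0 \<le> A" using A[of 0] x0[of 0] by simp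
  ultimately show ?thesis unfolding x_def j_def by blast
qed

lemma scaled_inverse_moments_bounded:
  assumes j: "0 < j"
  shows "(SUP n\<in>{1::nat..}. \<integral>\<^sup>+ w. ennreal ((real n / T n w) powr j) \<partial>M) < \<infinity>"
proof -
  define J where "J = nat \<lceil>j\<rceil>"
  have "0 < \<lceil>j\<rceil>" using j by simp
  then have "1 \<le> J" unfolding J_def by linarith
  moreover have "j \<le> real J" using j by (simp add: J_def)
  ultimately have J: "1 \<le> J" "j \<le> real J" by auto
  obtain A where A0: "0 \<le> A"
    and A: "\<And>n. (\<integral>w. T n w powr (- real J) \<partial>M) \<le> A * (real n + 1) powr (- real J)"
    using T_inverse_moment_decay[OF J(1)] by blast
  have "(\<integral>\<^sup>+ w. ennreal ((real n / T n w) powr j) \<partial>M) \<le> ennreal (1 + A)" for n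
  proof -
    have int: "integrable M (\<lambda>w. 1 + real n powr real J * T n w powr (- real J))"
      using J(1) by (intro Bochner_Integration.integrable_add integrable_mult_right integrable_T_powr) auto
    have "(\<integral>\<^sup>+ w. ennreal ((real n / T n w) powr j) \<partial>M)
        \<le> (\<integral>\<^sup>+ w. ennreal (1 + real n powr real J * T n w powr (- real J)) \<partial>M)"
      using ratio_powr_le_1_plus Y_pos j J(2) by (intro nn_integral_mono ennreal_leI) auto
    also have "\<dots> = ennreal (\<integral>w. 1 + real n powr real J * T n w powr (- real J) \<partial>M)"
      using int by (intro nn_integral_eq_integral) auto
    also have "(\<integral>w. 1 + real n powr real J * T n w powr (- real J) \<partial>M)
        = 1 + real n powr real J * (\<integral>w. T n w powr (- real J) \<partial>M)"
      using J(1) by (simp add: Bochner_Integration.integral_add integrable_T_powr P.prob_space)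
    also have "\<dots> \<le> ennreal (1 + A)"
    proof (intro ennreal_leI add_left_mono)
      have "real n powr real J * (real n + 1) powr (- real J) \<le> 1"
        by (simp add: powr_minus divide_inverse[symmetric] powr_mono2)
      then have "A * (real n powr real J * (real n + 1) powr (- real J)) \<le> A"
        using A0 by (simp add: mult_left_le)
      then show "real n powr real J * (\<integral>w. T n w powr (- real J) \<partial>M) \<le> A"
        using mult_left_mono[OF A[of n], of "real n powr real J"] by (simp add: mult.left_commute)
    qed
    finally show ?thesis .
  qed
  then have "(SUP n\<in>{1::nat..}. \<integral>\<^sup>+ w. ennreal ((real n / T n w) powr j) \<partial>M) \<le> ennreal (1 + A)"
    by (intro SUP_least)
  then show ?thesis by (simp add: le_less_trans)
qed

end

theorem theorem3p1:
  fixes M :: "'w measure" and S :: "'s measure"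
    and mu1 mu2 :: "'s measure" and u :: "'s \<Rightarrow> real" and a b :: real
    and xi1 xi2 :: "nat \<Rightarrow> 'w \<Rightarrow> 's" and U :: "nat \<Rightarrow> 'w \<Rightarrow> real"
    and y10 y20 :: real and r1 r2 :: "nat \<Rightarrow> 'w \<Rightarrow> real" and rho1 rho2 :: real
  assumes M: "prob_space M"
    and ab: "0 < a" "a \<le> b"
    and u_meas: "u \<in> borel_measurable S"
    and u_range: "\<forall>s\<in>space S. a \<le> u s \<and> u s \<le> b"
    and mu1: "prob_space mu1" "sets mu1 = sets S"
    and mu2: "prob_space mu2" "sets mu2 = sets S"
    and xi1_meas: "\<forall>n\<ge>1. xi1 n \<in> measurable M S"
    and xi2_meas: "\<forall>n\<ge>1. xi2 n \<in> measurable M S"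
    and U_meas: "\<forall>n\<ge>1. U n \<in> borel_measurable M"
    and xi1_distr: "\<forall>n\<ge>1. distr M S (xi1 n) = mu1"
    and xi2_distr: "\<forall>n\<ge>1. distr M S (xi2 n) = mu2"
    and U_distr: "\<forall>n\<ge>1. distr M lborel (U n) = uniform_measure lborel {0<..<1::real}"
    and indep: "prob_space.indep_sets M
        (\<lambda>(k, n). if k = (0::nat) then {xi1 n -` A \<inter> space M | A. A \<in> sets S}
                  else if k = 1 then {xi2 n -` A \<inter> space M | A. A \<in> sets S}
                  else {U n -` A \<inter> space M | A. A \<in> sets (borel :: real measure)})
        ({0, 1, 2} \<times> {1..})"
    and y0: "0 < y10" "0 < y20"
    and r_meas: "\<forall>n. r1 n \<in> borel_measurable (arru_F M S u xi1 xi2 U r1 r2 y10 y20 n)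
                   \<and> r2 n \<in> borel_measurable (arru_F M S u xi1 xi2 U r1 r2 y10 y20 n)"
    and r_range: "\<forall>n. \<forall>w\<in>space M. 0 < r1 n w \<and> r1 n w < 1 \<and> 0 < r2 n w \<and> r2 n w < 1"
    and r_order: "\<forall>n. AE w in M. r2 n w \<le> r1 n w"
    and rho: "0 < rho2" "rho2 \<le> rho1" "rho1 < 1"
    and m_neq: "integral\<^sup>L mu1 u \<noteq> integral\<^sup>L mu2 u"
    and condE1: "\<forall>\<epsilon>>0. \<exists>c1>0. \<exists>N. \<forall>n\<ge>N.
        measure M {w \<in> space M. \<bar>r1 n w - rho1\<bar> > \<epsilon>} \<le> c1 * exp (- real n * \<epsilon>\<^sup>2)"
    and condE2: "\<forall>\<epsilon>>0. \<exists>c1>0. \<exists>N. \<forall>n\<ge>N.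
        measure M {w \<in> space M. \<bar>r2 n w - rho2\<bar> > \<epsilon>} \<le> c1 * exp (- real n * \<epsilon>\<^sup>2)"
  shows "\<forall>j::real>0. (SUP n\<in>{1::nat..}. \<integral>\<^sup>+ w. ennreal
            ((real n / arru_Ytot u xi1 xi2 U r1 r2 y10 y20 n w) powr j) \<partial>M) < \<infinity>"
proof -
  interpret arru M S u a b xi1 xi2 U y10 y20 r1 r2 rho1 rho2
    unfolding arru_def using assms by (intro conjI) assumption+
  show ?thesis using scaled_inverse_moments_bounded by (simp add: arru_Ytot_eq_T)
qed

end
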